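(* Let $T_s>0$, $t_k=kT_s$ ($k=0,1,2,\dots$), $a\ge 0$, $\eta>0$, and let $b[k]\ge 0$ be a sequence. Let $V:[0,\infty)\to[0,\infty)$ be continuous, differentiable on each interval $(t_k,t_{k+1})$, and satisfy the functional-differential inequality $$\dot V(t)\le -2\eta V(t)+\sqrt{V(t)}\left(a\sup_{t_k\le t'\le t}\sqrt{V(t')}+b[k]\right),\qquad t_k\le t<t_{k+1},\ k=0,1,\dots$$ Let $0<\eta'<\eta$ and suppose $q<1$, where $$q=\max\left\{e^{-\eta' T_s}+\frac{a(1-e^{-\eta' T_s})}{2\eta'},\ \frac{a}{2(\eta-\eta')}\right\},\qquad r=\max\left\{\frac{1-e^{-\eta' T_s}}{2\eta'},\ \frac{1}{2(\eta-\eta')}\right\}.$$ Set $W(t)=\sqrt{V(t)}$, $W[k]=W(t_k)$, $W_0=W[0]$. Then: 1. $W[k+1]\le qW[k]+r\,b[k]$ for all $k\ge 0$; 2. $W[k]\le q^kW_0+r\sum_{i=0}^{k-1}b[i]\,q^{k-i-1}$ for all $k\ge 0$; 3. if $q<\rho<1$ and $b[k]=\frac{\rho-q}{r}W[k]$ for all $k$, then $W[k]$ decays exponentially: $W[k]\le\rho^kW_0$ for all $k\ge 0$. *)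

theory Defs
  imports Complex_Main
begin

definition q_const :: "real \<Rightarrow> real \<Rightarrow> real \<Rightarrow> real \<Rightarrow> real" where
  "q_const Ts a \<eta> \<eta>' = max (exp (- \<eta>' * Ts) + a * (1 - exp (- \<eta>' * Ts)) / (2 * \<eta>'))
                            (a / (2 * (\<eta> - \<eta>')))"

definition r_const :: "real \<Rightarrow> real \<Rightarrow> real \<Rightarrow> real" where
  "r_const Ts \<eta> \<eta>' = max ((1 - exp (- \<eta>' * Ts)) / (2 * \<eta>')) (1 / (2 * (\<eta> - \<eta>')))"

end

theory Submission
  imports Defs "HOL-Analysis.Analysis"
begin

(* Write W = sqrt V.  On each sampling interval [t0, t0 + Ts] the supremum term
   of the differential inequality is frozen at S = sup W over the whole interval,
   which leaves the autonomous inequality  V' <= -2 l V + 2 l C sqrt V  for every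
   rate 0 < l <= eta.  A barrier (first-crossing) argument shows that its
   solutions stay below the explicit envelope
        W(t) <= exp(-l (t - t0)) W(t0) + (1 - exp(-l (t - t0))) C.
   With l = eta this bounds S by max (W(t0), (a S + b)/(2 eta)); with l = eta'
   it bounds W(t0 + Ts).  Distinguishing whether S <= W(t0) yields the one-step
   estimate  W[k+1] <= q W[k] + r b[k]  (part 1).  Parts 2 and 3 are purely
   discrete: unrolling the linear recursion, and the feedback choice of b turning
   the recursion into  W[k+1] <= rho W[k]. *)

section \<open>A barrier principle on an interval\<close>

lemma nonpos_if_decreasing_at_zeros:
  fixes \<phi> :: "real \<Rightarrow> real"
  assumes cont: "continuous_on {t0..t2} \<phi>"
    and start: "\<phi> t0 < 0"
    and down: "\<And>s. t0 < s \<Longrightarrow> s < t2 \<Longrightarrow> \<phi> s = 0 \<Longrightarrow>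
                 \<exists>D. (\<phi> has_real_derivative D) (at s) \<and> D < 0"
    and t: "t \<in> {t0..t2}"
  shows "\<phi> t \<le> 0"
proof (rule ccontr)
  assume "\<not> \<phi> t \<le> 0"
  hence pos: "\<phi> t > 0" by simp
  have cont_t: "continuous_on {t0..t} \<phi>"
    using t by (intro continuous_on_subset[OF cont]) auto
  \<comment> \<open>the first time in [t0, t] at which \<phi> is nonnegative\<close>
  define Z where "Z = {t0..t} \<inter> \<phi> -` {0..}"
  have "closed Z" unfolding Z_def by (rule continuous_closed_preimage[OF cont_t]) auto
  moreover have "bounded Z" unfolding Z_def by (rule bounded_subset[of "{t0..t}"]) auto
  ultimately have "compact Z" using compact_eq_bounded_closed by blast
  moreover have "t \<in> Z" unfolding Z_def using pos t by auto
  ultimately obtain s where sZ: "s \<in> Z" and s_min: "\<And>y. y \<in> Z \<Longrightarrow> s \<le> y"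
    using compact_attains_inf[of Z] by auto
  have s: "t0 \<le> s" "s \<le> t" "\<phi> s \<ge> 0" using sZ unfolding Z_def by auto
  \<comment> \<open>by the intermediate value theorem \<phi> vanishes at this first time\<close>
  obtain x where x: "t0 \<le> x" "x \<le> s" "\<phi> x = 0"
    using IVT'[of \<phi> t0 0 s] start s continuous_on_subset[OF cont_t, of "{t0..s}"] by auto
  have "x \<in> Z" unfolding Z_def using x s by auto
  hence zero: "\<phi> s = 0" using s_min[of x] x by simp
  have "s \<noteq> t0" "s \<noteq> t" using zero start pos by auto
  hence inside: "t0 < s" "s < t2" using s t by auto
  obtain D where D: "(\<phi> has_real_derivative D) (at s)" "D < 0"
    using down[OF inside zero] by blast
  obtain d where d: "d > 0" "\<And>h. h > 0 \<Longrightarrow> h < d \<Longrightarrow> \<phi> s < \<phi> (s - h)"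
    using DERIV_neg_dec_left[OF D] by blast
  \<comment> \<open>so \<phi> is already positive slightly before s, contradicting minimality\<close>
  define h where "h = min (d / 2) (s - t0)"
  have h: "0 < h" "h < d" "h \<le> s - t0" using d inside unfolding h_def by auto
  have "s - h \<in> Z" unfolding Z_def using d(2)[OF h(1,2)] zero h s by auto
  with s_min[of "s - h"] h(1) show False by simp
qed

section \<open>Comparison with an exponential envelope\<close>

(* Solutions of  V' <= -2 l V + 2 l C sqrt V  satisfy, up to any slack eps > 0,
   sqrt V(t) <= exp(-l (t - t0)) W0 + (1 - exp(-l (t - t0))) C, which is the
   solution of  W' = -l W + l C  started at W0.  The slack makes the barrier
   \<phi> = V - G^2 strictly decreasing at its zeros. *)
lemma sqrt_le_exp_envelope_eps:
  fixes V :: "real \<Rightarrow> real"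
  assumes l: "l > 0" and C: "C \<ge> 0" and W0: "W0 \<ge> 0" and eps: "\<epsilon> > 0"
    and cont: "continuous_on {t0..t2} V"
    and nn: "\<And>t. t \<in> {t0..t2} \<Longrightarrow> V t \<ge> 0"
    and init: "sqrt (V t0) \<le> W0"
    and der: "\<And>t. t0 < t \<Longrightarrow> t < t2 \<Longrightarrow>
                \<exists>D. (V has_real_derivative D) (at t) \<and> D \<le> -2*l*V t + 2*l*C * sqrt (V t)"
    and t: "t \<in> {t0..t2}"
  shows "sqrt (V t) \<le> exp (-l*(t-t0)) * W0 + (1 - exp (-l*(t-t0))) * C + \<epsilon>"
proof -
  define G where "G s = exp (-l*(s-t0)) * W0 + (1 - exp (-l*(s-t0))) * C + \<epsilon>" for s
  define \<phi> where "\<phi> s = V s - (G s)^2" for s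
  have G_ge: "G s \<ge> \<epsilon>" if "s \<ge> t0" for s
  proof -
    have "exp (-l*(s-t0)) \<le> 1" using that l by simp
    then show ?thesis unfolding G_def using W0 C by simp
  qed
  have "V t0 = (sqrt (V t0))^2" using nn t by simp
  also have "\<dots> \<le> W0^2" using init nn t by (intro power_mono) auto
  also have "\<dots> < (G t0)^2" unfolding G_def using W0 eps by (intro power_strict_mono) auto
  finally have start: "\<phi> t0 < 0" unfolding \<phi>_def by simp
  have cont_\<phi>: "continuous_on {t0..t2} \<phi>"
    unfolding \<phi>_def G_def by (intro continuous_intros cont)
  have down: "\<exists>D. (\<phi> has_real_derivative D) (at s) \<and> D < 0"
    if s: "t0 < s" "s < t2" and zero: "\<phi> s = 0" for s
  proof -
    obtain D where D: "(V has_real_derivative D) (at s)" "D \<le> -2*l*V s + 2*l*C * sqrt (V s)"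
      using der[OF s] by blast
    have Gs: "G s \<ge> \<epsilon>" using G_ge s by simp
    have Vs: "V s = (G s)^2" using zero unfolding \<phi>_def by simp
    have sqrt_Vs: "sqrt (V s) = G s" using Vs Gs eps by simp
    have "(G has_real_derivative l * (C + \<epsilon> - G s)) (at s)"
      unfolding G_def by (auto intro!: derivative_eq_intros simp: algebra_simps)
    hence "(\<phi> has_real_derivative D - 2 * G s * (l * (C + \<epsilon> - G s))) (at s)"
      unfolding \<phi>_def[abs_def] using D(1) by (auto intro!: derivative_eq_intros)
    moreover have "D - 2 * G s * (l * (C + \<epsilon> - G s)) \<le> -2 * l * \<epsilon> * G s"
      using D(2) Gs eps unfolding sqrt_Vs Vs by (simp add: algebra_simps power2_eq_square)
    moreover have "-2 * l * \<epsilon> * G s < 0" using l eps Gs by simp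
    ultimately show ?thesis by (meson le_less_trans)
  qed
  have "\<phi> t \<le> 0" by (rule nonpos_if_decreasing_at_zeros[OF cont_\<phi> start down t])
  hence "sqrt (V t) \<le> sqrt ((G t)^2)" unfolding \<phi>_def by (intro real_sqrt_le_mono) simp
  also have "\<dots> = G t" using G_ge[of t] t eps by simp
  finally show ?thesis unfolding G_def .
qed

lemma sqrt_le_exp_envelope:
  fixes V :: "real \<Rightarrow> real"
  assumes l: "l > 0" and C: "C \<ge> 0" and W0: "W0 \<ge> 0"
    and cont: "continuous_on {t0..t2} V"
    and nn: "\<And>t. t \<in> {t0..t2} \<Longrightarrow> V t \<ge> 0"
    and init: "sqrt (V t0) \<le> W0"
    and der: "\<And>t. t0 < t \<Longrightarrow> t < t2 \<Longrightarrow>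
                \<exists>D. (V has_real_derivative D) (at t) \<and> D \<le> -2*l*V t + 2*l*C * sqrt (V t)"
    and t: "t \<in> {t0..t2}"
  shows "sqrt (V t) \<le> exp (-l*(t-t0)) * W0 + (1 - exp (-l*(t-t0))) * C"
  by (rule field_le_epsilon, rule sqrt_le_exp_envelope_eps[OF l C W0 _ cont nn init der t]) auto

section \<open>One sampling interval\<close>

lemma bdd_above_sqrt_image:
  fixes V :: "real \<Rightarrow> real"
  assumes "continuous_on {t0..t2} V"
  shows "bdd_above ((\<lambda>t. sqrt (V t)) ` {t0..t2})"
proof -
  have "continuous_on {t0..t2} (\<lambda>t. sqrt (V t))" by (intro continuous_intros assms)
  hence "compact ((\<lambda>t. sqrt (V t)) ` {t0..t2})" by (rule compact_continuous_image) simp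
  thus ?thesis by (intro bounded_imp_bdd_above compact_imp_bounded)
qed

(* Freezing the running supremum at its value S over the whole interval turns
   the functional inequality into the autonomous one, for every rate l <= eta;
   hence the envelope with constant C = (a S + beta)/(2 l). *)
lemma frozen_sup_envelope:
  fixes V :: "real \<Rightarrow> real"
  assumes a: "a \<ge> 0" and \<beta>: "\<beta> \<ge> 0" and l: "0 < l" "l \<le> \<eta>"
    and cont: "continuous_on {t0..t2} V"
    and nn: "\<And>t. t \<in> {t0..t2} \<Longrightarrow> V t \<ge> 0"
    and der: "\<And>t. t0 < t \<Longrightarrow> t < t2 \<Longrightarrow>
        \<exists>D. (V has_real_derivative D) (at t) \<and>
            D \<le> - 2 * \<eta> * V t + sqrt (V t) * (a * (SUP t'\<in>{t0..t}. sqrt (V t')) + \<beta>)"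
    and t: "t \<in> {t0..t2}"
  shows "sqrt (V t) \<le> exp (-l*(t-t0)) * sqrt (V t0)
            + (1 - exp (-l*(t-t0))) * ((a * (SUP t'\<in>{t0..t2}. sqrt (V t')) + \<beta>) / (2*l))"
proof -
  define S where "S = (SUP t'\<in>{t0..t2}. sqrt (V t'))"
  have bdd: "bdd_above ((\<lambda>t. sqrt (V t)) ` {t0..t2})" by (rule bdd_above_sqrt_image[OF cont])
  have "0 \<le> sqrt (V t0)" using nn[of t0] t by simp
  also have "sqrt (V t0) \<le> S" unfolding S_def using t by (intro cSUP_upper[OF _ bdd]) auto
  finally have S0: "S \<ge> 0" .
  show ?thesis unfolding S_def[symmetric]
  proof (rule sqrt_le_exp_envelope[OF l(1) _ _ cont nn order.refl _ t])
    show "0 \<le> (a * S + \<beta>) / (2 * l)" using a S0 \<beta> l by simp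
    fix s assume s: "t0 < s" "s < t2"
    obtain D where D: "(V has_real_derivative D) (at s)"
      "D \<le> - 2 * \<eta> * V s + sqrt (V s) * (a * (SUP t'\<in>{t0..s}. sqrt (V t')) + \<beta>)"
      using der[OF s] by blast
    have "(SUP t'\<in>{t0..s}. sqrt (V t')) \<le> S"
      unfolding S_def using s bdd by (intro cSUP_subset_mono) auto
    hence "sqrt (V s) * (a * (SUP t'\<in>{t0..s}. sqrt (V t')) + \<beta>) \<le> sqrt (V s) * (a * S + \<beta>)"
      using a nn[of s] s by (intro mult_left_mono) (auto intro: mult_left_mono)
    moreover have "- 2 * \<eta> * V s \<le> -2 * l * V s" using nn[of s] s l by (simp add: mult_right_mono)
    ultimately have "D \<le> -2 * l * V s + sqrt (V s) * (a * S + \<beta>)" using D(2) by linarith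
    also have "\<dots> = -2 * l * V s + 2 * l * ((a * S + \<beta>) / (2 * l)) * sqrt (V s)" using l by simp
    finally show "\<exists>D. (V has_real_derivative D) (at s) \<and>
            D \<le> -2 * l * V s + 2 * l * ((a * S + \<beta>) / (2 * l)) * sqrt (V s)"
      using D(1) by blast
  qed (use nn[of t0] t in simp)
qed

lemma q_const_facts:
  assumes Ts: "Ts > 0" and a: "a \<ge> 0" and eta': "0 < \<eta>'" "\<eta>' < \<eta>"
    and q_lt: "q_const Ts a \<eta> \<eta>' < 1"
  shows "a < 2 * \<eta>'" and "q_const Ts a \<eta> \<eta>' \<ge> 0"
proof -
  define e where "e = exp (- \<eta>' * Ts)"
  have e: "e < 1" unfolding e_def using eta' Ts by simp
  have "e + a * (1 - e) / (2 * \<eta>') < 1" using q_lt unfolding q_const_def e_def by simp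
  hence "a * (1 - e) < (2 * \<eta>') * (1 - e)" using eta' by (simp add: field_simps)
  thus "a < 2 * \<eta>'" using e by (simp add: mult_less_cancel_right)
  have "a / (2 * (\<eta> - \<eta>')) \<ge> 0" using a eta' by simp
  thus "q_const Ts a \<eta> \<eta>' \<ge> 0" unfolding q_const_def by linarith
qed

(* If S <= W(t0), the
   envelope at rate eta' is dominated by the first components of q and r; otherwise
   the rate-eta envelope gives S <= beta / (2 (eta - eta')), dominated by the
   second component of r. *)
lemma one_step_bound:
  fixes V :: "real \<Rightarrow> real"
  assumes Ts: "Ts > 0" and len: "t1 - t0 = Ts" and a: "a \<ge> 0" and \<beta>: "\<beta> \<ge> 0"
    and eta': "0 < \<eta>'" "\<eta>' < \<eta>"
    and q_lt: "q_const Ts a \<eta> \<eta>' < 1"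
    and cont: "continuous_on {t0..t1} V"
    and nn: "\<And>t. t \<in> {t0..t1} \<Longrightarrow> V t \<ge> 0"
    and der: "\<And>t. t0 < t \<Longrightarrow> t < t1 \<Longrightarrow>
        \<exists>D. (V has_real_derivative D) (at t) \<and>
            D \<le> - 2 * \<eta> * V t + sqrt (V t) * (a * (SUP t'\<in>{t0..t}. sqrt (V t')) + \<beta>)"
  shows "sqrt (V (t1)) \<le> q_const Ts a \<eta> \<eta>' * sqrt (V t0) + r_const Ts \<eta> \<eta>' * \<beta>"
proof -
  define q r where "q = q_const Ts a \<eta> \<eta>'" and "r = r_const Ts \<eta> \<eta>'"
  define e where "e = exp (- \<eta>' * Ts)"
  define W where "W t = sqrt (V t)" for t
  define S where "S = (SUP t\<in>{t0..t1}. W t)"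
  have e: "0 < e" "e < 1" unfolding e_def using eta' Ts by auto
  have a2: "a < 2 * \<eta>'" and q0: "q \<ge> 0" using q_const_facts[OF Ts a eta' q_lt] q_def by auto
  have W_le_S: "W t \<le> S" if "t \<in> {t0..t1}" for t
    unfolding S_def W_def using that by (intro cSUP_upper bdd_above_sqrt_image[OF cont])
  have W0: "W t0 \<ge> 0" unfolding W_def using nn[of t0] Ts len by simp
  have envelope: "W t \<le> exp (-l*(t-t0)) * W t0 + (1 - exp (-l*(t-t0))) * ((a*S + \<beta>) / (2*l))"
    if "0 < l" "l \<le> \<eta>" "t \<in> {t0..t1}" for l t
    unfolding W_def S_def by (rule frozen_sup_envelope[OF a \<beta> that(1,2) cont nn der that(3)])
  have W_le_max: "W t \<le> max (W t0) ((a*S + \<beta>) / (2*\<eta>))" if t: "t \<in> {t0..t1}" for t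
  proof -
    have "W t \<le> exp (-\<eta>*(t-t0)) * W t0 + (1 - exp (-\<eta>*(t-t0))) * ((a*S + \<beta>) / (2*\<eta>))"
      using envelope[OF _ order.refl t] eta' by simp
    also have "\<dots> \<le> max (W t0) ((a*S + \<beta>) / (2*\<eta>))"
      using t eta' by (intro convex_bound_le) auto
    finally show ?thesis .
  qed
  have "(SUP t\<in>{t0..t1}. W t) \<le> max (W t0) ((a*S + \<beta>) / (2*\<eta>))"
    using W_le_max Ts len by (intro cSUP_least) auto
  hence S_max: "S \<le> max (W t0) ((a*S + \<beta>) / (2*\<eta>))" by (simp only: S_def[symmetric])
  have "W (t1) \<le> q * W t0 + r * \<beta>"
  proof (cases "S \<le> W t0")
    case True
    have "W (t1) \<le> e * W t0 + (1 - e) * ((a*S + \<beta>) / (2*\<eta>'))"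
      using envelope[of \<eta>' t1] eta' Ts len unfolding e_def by simp
    also have "\<dots> \<le> e * W t0 + (1 - e) * ((a * W t0 + \<beta>) / (2*\<eta>'))"
      using True a eta' e by (intro add_left_mono mult_left_mono divide_right_mono)
        (auto intro: mult_left_mono)
    also have "\<dots> = (e + a * (1 - e) / (2*\<eta>')) * W t0 + ((1 - e) / (2*\<eta>')) * \<beta>"
      using eta' by (simp add: field_simps)
    also have "\<dots> \<le> q * W t0 + r * \<beta>"
      using W0 \<beta> unfolding q_def r_def q_const_def r_const_def e_def
      by (intro add_mono mult_right_mono) auto
    finally show ?thesis .
  next
    case False
    hence "S \<le> (a*S + \<beta>) / (2*\<eta>)" using S_max by linarith
    hence "2*\<eta> * S \<le> a*S + \<beta>" using eta' by (simp add: field_simps)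
    moreover have "a * S \<le> 2 * \<eta>' * S"
      using a2 W_le_S[of t0] W0 Ts len by (intro mult_right_mono) auto
    ultimately have "2 * (\<eta> - \<eta>') * S \<le> \<beta>" by (simp add: algebra_simps)
    hence "S \<le> \<beta> * (1 / (2 * (\<eta> - \<eta>')))" using eta' by (simp add: field_simps)
    also have "\<dots> \<le> \<beta> * r" unfolding r_def r_const_def using \<beta> by (intro mult_left_mono) auto
    also have "\<dots> \<le> q * W t0 + r * \<beta>" using q0 W0 by (simp add: mult.commute)
    finally show ?thesis using W_le_S[of t1] Ts len by simp
  qed
  thus ?thesis unfolding W_def q_def r_def .
qed

section \<open>The discrete recursion\<close>

lemma linear_recursion_unroll:
  fixes W b :: "nat \<Rightarrow> real" and q r :: real
  assumes rec: "\<And>k. W (Suc k) \<le> q * W k + r * b k" and q0: "q \<ge> 0"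
  shows "W k \<le> q ^ k * W 0 + r * (\<Sum>i<k. b i * q ^ (k - i - 1))"
proof (induction k)
  case 0
  show ?case by simp
next
  case (Suc k)
  have sum_Suc: "(\<Sum>i<Suc k. b i * q ^ (Suc k - i - 1)) = q * (\<Sum>i<k. b i * q ^ (k - i - 1)) + b k"
  proof -
    have "(\<Sum>i<k. b i * q ^ (Suc k - i - 1)) = (\<Sum>i<k. q * (b i * q ^ (k - i - 1)))"
    proof (rule sum.cong)
      fix i assume "i \<in> {..<k}"
      hence "Suc k - i - 1 = Suc (k - i - 1)" by auto
      thus "b i * q ^ (Suc k - i - 1) = q * (b i * q ^ (k - i - 1))" by simp
    qed simp
    thus ?thesis by (simp add: sum_distrib_left)
  qed
  have "W (Suc k) \<le> q * W k + r * b k" by (rule rec)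
  also have "\<dots> \<le> q * (q ^ k * W 0 + r * (\<Sum>i<k. b i * q ^ (k - i - 1))) + r * b k"
    using Suc.IH q0 by (intro add_right_mono mult_left_mono) auto
  also have "\<dots> = q ^ Suc k * W 0 + r * (\<Sum>i<Suc k. b i * q ^ (Suc k - i - 1))"
    unfolding sum_Suc by (simp add: algebra_simps)
  finally show ?case .
qed

lemma geometric_decay:
  fixes W :: "nat \<Rightarrow> real"
  assumes rec: "\<And>k. W (Suc k) \<le> \<rho> * W k" and \<rho>: "\<rho> \<ge> 0"
  shows "W k \<le> \<rho> ^ k * W 0"
proof (induction k)
  case (Suc k)
  have "W (Suc k) \<le> \<rho> * W k" by (rule rec)
  also have "\<dots> \<le> \<rho> * (\<rho> ^ k * W 0)" using Suc.IH \<rho> by (rule mult_left_mono)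
  finally show ?case by simp
qed simp

theorem lemma1:
  fixes Ts a \<eta> \<eta>' :: real and b :: "nat \<Rightarrow> real" and V :: "real \<Rightarrow> real"
  assumes Ts: "Ts > 0" and a: "a \<ge> 0" and eta: "\<eta> > 0"
    and b_nonneg: "\<And>k. b k \<ge> 0"
    and V_nonneg: "\<And>t. t \<ge> 0 \<Longrightarrow> V t \<ge> 0"
    and V_cont: "continuous_on {0..} V"
    and V_deriv: "\<And>k t. real k * Ts < t \<Longrightarrow> t < real (Suc k) * Ts \<Longrightarrow>
        \<exists>D. (V has_real_derivative D) (at t) \<and>
            D \<le> - 2 * \<eta> * V t + sqrt (V t) *
                 (a * (SUP t'\<in>{real k * Ts..t}. sqrt (V t')) + b k)"
    and eta': "0 < \<eta>'" "\<eta>' < \<eta>"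
    and q_lt: "q_const Ts a \<eta> \<eta>' < 1"
  shows "(\<forall>k. sqrt (V (real (Suc k) * Ts))
              \<le> q_const Ts a \<eta> \<eta>' * sqrt (V (real k * Ts)) + r_const Ts \<eta> \<eta>' * b k)
       \<and> (\<forall>k. sqrt (V (real k * Ts))
              \<le> q_const Ts a \<eta> \<eta>' ^ k * sqrt (V 0)
                 + r_const Ts \<eta> \<eta>' * (\<Sum>i<k. b i * q_const Ts a \<eta> \<eta>' ^ (k - i - 1)))
       \<and> (\<forall>\<rho>. q_const Ts a \<eta> \<eta>' < \<rho> \<and> \<rho> < 1 \<and>
              (\<forall>k. b k = (\<rho> - q_const Ts a \<eta> \<eta>') / r_const Ts \<eta> \<eta>' * sqrt (V (real k * Ts)))
              \<longrightarrow> (\<forall>k. sqrt (V (real k * Ts)) \<le> \<rho> ^ k * sqrt (V 0)))"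
proof -
  define q r where "q = q_const Ts a \<eta> \<eta>'" and "r = r_const Ts \<eta> \<eta>'"
  define W where "W k = sqrt (V (real k * Ts))" for k
  have q0: "q \<ge> 0" using q_const_facts[OF Ts a eta' q_lt] q_def by simp
  have r0: "r > 0" unfolding r_def r_const_def using eta' by (simp add: less_max_iff_disj)
  have part1: "W (Suc k) \<le> q * W k + r * b k" for k
    unfolding W_def q_def r_def
  proof (rule one_step_bound[OF Ts _ a b_nonneg eta' q_lt _ _ V_deriv])
    have start: "real k * Ts \<ge> 0" using Ts by simp
    show "continuous_on {real k * Ts..real (Suc k) * Ts} V"
      using start by (intro continuous_on_subset[OF V_cont]) auto
    show "V t \<ge> 0" if "t \<in> {real k * Ts..real (Suc k) * Ts}" for t
      using that start V_nonneg by auto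
    show "real (Suc k) * Ts - real k * Ts = Ts" by (simp add: algebra_simps)
  qed
  have part3: "W k \<le> \<rho> ^ k * W 0"
    if "q < \<rho>" and "\<forall>k. b k = (\<rho> - q) / r * W k" for \<rho> k
  proof (rule geometric_decay)
    show "W (Suc k) \<le> \<rho> * W k" for k using part1[of k] that r0 by (simp add: field_simps)
  qed (use that q0 in simp)
  show ?thesis
    using part1 linear_recursion_unroll[where W = W and b = b, OF part1 q0] part3
    unfolding q_def[symmetric] r_def[symmetric] W_def[symmetric]
    by (simp add: W_def)
qed

end
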